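(* Let $k$ be an odd positive integer and suppose $$k^2=a^2+b^2+c^2=a'^2+b'^2+c'^2$$ are two different representations with integers $a,b,c,a',b',c'$, $\gcd(a,b,c,a',b',c')=1$, $c'>c$, and $a,a'$ both odd. Set $$\Delta_{12}=\tfrac{a'-a}{2},\ \Delta_{34}=\tfrac{a+a'}{2},\ \Delta_{13}=-\tfrac{b'-b}{2},\ \Delta_{24}=\tfrac{b+b'}{2},\ \Delta_{14}=\tfrac{c+c'}{2},\ \Delta_{23}=\tfrac{c'-c}{2}.$$ Then these are integers satisfying $$\Delta_{12}\Delta_{34}-\Delta_{13}\Delta_{24}+\Delta_{14}\Delta_{23}=0$$ and $$k^2=(\Delta_{12}\pm \Delta_{34})^2+(\Delta_{13}\mp\Delta_{24})^2+(\Delta_{14}\pm\Delta_{23})^2$$ (for both choices of signs). Moreover, the set $\mathcal S$ of all $[u,v,w,t]\in\mathbb{Z}^4$ with $$\Delta_{34}v+\Delta_{24}w+\Delta_{23}t=0,\qquad \Delta_{23}u+\Delta_{13}v+\Delta_{12}w=0$$ is a two-dimensional lattice that contains a family of lattice squares, i.e. there exist nonzero vectors $X,Y\in\mathcal S$ with $X\cdot Y=0$ and $X\cdot X=Y\cdot Y$.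
   Context: $\cdot$ denotes the standard dot product on $\mathbb{R}^4$. *)

theory Defs
  imports "HOL-Analysis.Analysis"
begin

definition lattice2 :: "(real^4) set \<Rightarrow> bool" where
  "lattice2 L \<longleftrightarrow> (\<exists>u v. u \<noteq> v \<and> independent {u, v} \<and>
      L = {of_int m *\<^sub>R u + of_int n *\<^sub>R v | m n. True})"

definition lattice_S :: "real \<Rightarrow> real \<Rightarrow> real \<Rightarrow> real \<Rightarrow> real \<Rightarrow> (real^4) set" where
  "lattice_S D12 D13 D23 D24 D34 = {x. (\<forall>i. x $ i \<in> \<int>) \<and>
      D34 * x $ 2 + D24 * x $ 3 + D23 * x $ 4 = 0 \<and>
      D23 * x $ 1 + D13 * x $ 2 + D12 * x $ 3 = 0}"

end

theory Submission
  imports Defs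
begin

(*
  Write a = \<Delta>34 - \<Delta>12, a' = \<Delta>12 + \<Delta>34, etc.  Reducing the two representations
  modulo 4 shows that b, c, b', c' are even, so the \<Delta>'s are integers.  Subtracting and
  adding the two representations of k^2 gives the Pluecker relation and
  k^2 = \<Sigma> \<Delta>^2.  Since \<Delta>23 \<noteq> 0, a point of S is determined by its middle
  coordinates (v, w), which range over a full-rank sublattice of \<int>^2; a triangular
  basis of that sublattice lifts to a basis of S.  Finally
  X = k (-\<Delta>13, \<Delta>23, 0, -\<Delta>34) and an explicit Y in S are orthogonal, and
  |Y|^2 = (\<Delta>13^2 + \<Delta>23^2 + \<Delta>34^2) \<Sigma> \<Delta>^2 - (Pluecker form)^2 = |X|^2.
*)

lemma square_mod_4: "(x::int)^2 mod 4 = (if even x then 0 else 1)"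
proof (cases "even x")
  case True
  then obtain y where "x = 2 * y" by blast
  then show ?thesis by (simp add: power2_eq_square)
next
  case False
  then obtain y where "x = 2 * y + 1" by (blast elim: oddE)
  define z where "z = y^2 + y"
  have "x^2 = 4 * z + 1" using \<open>x = 2 * y + 1\<close> by (simp add: z_def power2_eq_square algebra_simps)
  then show ?thesis using False by presburger
qed

lemma odd_square_sum_three_squares_even:
  fixes k a b c :: int
  assumes "odd k" "odd a" "k^2 = a^2 + b^2 + c^2"
  shows "even b"
proof (rule ccontr)
  assume "odd b"
  have "k^2 mod 4 = ((a^2 + b^2) mod 4 + c^2 mod 4) mod 4" "(a^2 + b^2) mod 4 = (a^2 mod 4 + b^2 mod 4) mod 4"
    by (simp_all add: assms(3) mod_add_eq)
  then show False
    using square_mod_4[of k] square_mod_4[of a] square_mod_4[of b] square_mod_4[of c]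
      assms(1,2) \<open>odd b\<close> by (simp split: if_splits)
qed

lemma pluecker_relation_of_two_representations:
  fixes k d12 d13 d14 d23 d24 d34 :: int
  assumes "k^2 = (d34 - d12)^2 + (d24 + d13)^2 + (d14 - d23)^2"
    and "k^2 = (d12 + d34)^2 + (d24 - d13)^2 + (d14 + d23)^2"
  shows "d12 * d34 - d13 * d24 + d14 * d23 = 0"
    and "k^2 = d12^2 + d13^2 + d14^2 + d23^2 + d24^2 + d34^2"
proof -
  let ?R1 = "(d34 - d12)^2 + (d24 + d13)^2 + (d14 - d23)^2"
  let ?R2 = "(d12 + d34)^2 + (d24 - d13)^2 + (d14 + d23)^2"
  have "4 * (d12 * d34 - d13 * d24 + d14 * d23) = ?R2 - ?R1"
    "2 * (d12^2 + d13^2 + d14^2 + d23^2 + d24^2 + d34^2) = ?R2 + ?R1"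
    by algebra+
  then have "4 * (d12 * d34 - d13 * d24 + d14 * d23) = k^2 - k^2"
    "2 * (d12^2 + d13^2 + d14^2 + d23^2 + d24^2 + d34^2) = k^2 + k^2"
    by (simp_all only: flip: assms)
  then show "d12 * d34 - d13 * d24 + d14 * d23 = 0"
    and "k^2 = d12^2 + d13^2 + d14^2 + d23^2 + d24^2 + d34^2" by simp_all
qed

lemma int_combination_closed_eq_multiples:
  fixes B :: "int set"
  assumes closed: "\<And>x y m n. x \<in> B \<Longrightarrow> y \<in> B \<Longrightarrow> m * x + n * y \<in> B"
    and "N \<in> B" "N \<noteq> 0"
  shows "\<exists>g>0. g \<in> B \<and> B = range (\<lambda>m. m * g)"
proof -
  define P where "P n \<longleftrightarrow> n > 0 \<and> int n \<in> B" for n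
  have "\<bar>N\<bar> \<in> B" using closed[OF \<open>N \<in> B\<close> \<open>N \<in> B\<close>, of "sgn N" 0] by (simp add: abs_sgn mult.commute)
  then have "P (nat \<bar>N\<bar>)" using \<open>N \<noteq> 0\<close> by (simp add: P_def)
  then have least: "P (LEAST n. P n)" "\<And>n. P n \<Longrightarrow> (LEAST n. P n) \<le> n"
    by (auto intro: LeastI Least_le)
  define g where "g = int (LEAST n. P n)"
  have g: "g > 0" "g \<in> B" using least(1) by (simp_all add: P_def g_def)
  have "x = (x div g) * g" if "x \<in> B" for x
  proof -
    have "1 * x + (- (x div g)) * g \<in> B" using closed[OF that g(2)] .
    then have r: "x mod g \<in> B" by (simp add: minus_div_mult_eq_mod[symmetric])
    have r_bounds: "0 \<le> x mod g" "x mod g < g" using g by simp_all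
    have "x mod g = 0"
    proof (rule ccontr)
      assume "x mod g \<noteq> 0"
      with r r_bounds(1) have "P (nat (x mod g))" by (simp add: P_def)
      from least(2)[OF this] have "g \<le> x mod g" using r_bounds(1) by (simp add: g_def)
      with r_bounds(2) show False by simp
    qed
    then show ?thesis by (metis div_mult_mod_eq add_0_right)
  qed
  moreover have "m * g \<in> B" for m using closed[OF g(2) g(2), of m 0] by simp
  ultimately show ?thesis using g by blast
qed

lemma int_pair_lattice_triangular_basis:
  fixes A :: "(int \<times> int) set"
  assumes closed: "\<And>v w v2 w2 m n. (v, w) \<in> A \<Longrightarrow> (v2, w2) \<in> A \<Longrightarrow> (m * v + n * v2, m * w + n * w2) \<in> A"
    and "(N, 0) \<in> A" "(0, N) \<in> A" "N \<noteq> 0"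
  obtains g w0 h where "g \<noteq> 0" "h \<noteq> 0" "(g, w0) \<in> A" "(0, h) \<in> A"
    "A = {(m*g, m*w0 + n*h) | m n. True}"
proof -
  have "m*x + n*y \<in> fst ` A" if x: "x \<in> fst ` A" and y: "y \<in> fst ` A" for x y m n
  proof -
    obtain wx wy where "(x, wx) \<in> A" "(y, wy) \<in> A" using x y by force
    from closed[OF this] show ?thesis by (metis fst_conv image_eqI)
  qed
  moreover have "N \<in> fst ` A" using \<open>(N, 0) \<in> A\<close> by (metis fst_conv image_eqI)
  ultimately obtain g where g: "g > 0" "g \<in> fst ` A" and fst_A: "fst ` A = range (\<lambda>m. m * g)"
    using int_combination_closed_eq_multiples[of "fst ` A" N] \<open>N \<noteq> 0\<close> by blast
  have "m*x + n*y \<in> {w. (0, w) \<in> A}" if "x \<in> {w. (0, w) \<in> A}" "y \<in> {w. (0, w) \<in> A}" for x y m n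
    using closed[of 0 x 0 y m n] that by simp
  then obtain h where h: "h > 0" "h \<in> {w. (0, w) \<in> A}" and snd_A: "{w. (0, w) \<in> A} = range (\<lambda>n. n * h)"
    using int_combination_closed_eq_multiples[of "{w. (0, w) \<in> A}" N] assms by blast
  obtain w0 where w0: "(g, w0) \<in> A" using g(2) by force
  have "(v, w) \<in> A \<longleftrightarrow> (\<exists>m n. v = m*g \<and> w = m*w0 + n*h)" for v w
  proof
    assume vw: "(v, w) \<in> A"
    then obtain m where m: "v = m * g" using fst_A by force
    have "(1 * v + (- m) * g, 1 * w + (- m) * w0) \<in> A" using closed[OF vw w0] .
    then have "w - m*w0 \<in> {w. (0, w) \<in> A}" using m by simp
    then obtain n where "w - m*w0 = n*h" using snd_A by blast
    then show "\<exists>m n. v = m*g \<and> w = m*w0 + n*h" using m by (metis diff_add_cancel add.commute)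
  next
    assume "\<exists>m n. v = m*g \<and> w = m*w0 + n*h"
    then show "(v, w) \<in> A" using closed[OF w0, of 0 h] h(2) by force
  qed
  then have A_eq: "A = {(m*g, m*w0 + n*h) | m n. True}" by auto
  show thesis by (rule that[OF _ _ w0 _ A_eq]) (use g h in simp_all)
qed

definition int_vec4 :: "int \<Rightarrow> int \<Rightarrow> int \<Rightarrow> int \<Rightarrow> real^4" where
  "int_vec4 a b c d = (\<chi> i. of_int (if i = 1 then a else if i = 2 then b else if i = 3 then c else d))"

lemma int_vec4_nth [simp]:
  "int_vec4 a b c d $ 1 = of_int a" "int_vec4 a b c d $ 2 = of_int b"
  "int_vec4 a b c d $ 3 = of_int c" "int_vec4 a b c d $ 4 = of_int d"
  by (simp_all add: int_vec4_def)

lemma inner_int_vec4: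
  "int_vec4 a b c d \<bullet> int_vec4 a2 b2 c2 d2 = of_int (a*a2 + b*b2 + c*c2 + d*d2)"
  by (simp add: inner_vec_def sum_4)

lemma int_vec4_eq_0_iff: "int_vec4 a b c d = 0 \<longleftrightarrow> a = 0 \<and> b = 0 \<and> c = 0 \<and> d = 0"
  by (simp add: vec_eq_iff forall_4)

lemma int_combination_int_vec4:
  "of_int m *\<^sub>R int_vec4 a b c d + of_int n *\<^sub>R int_vec4 a2 b2 c2 d2
    = int_vec4 (m*a + n*a2) (m*b + n*b2) (m*c + n*c2) (m*d + n*d2)"
  by (simp add: vec_eq_iff forall_4)

lemma Ints_vec4_cases:
  fixes x :: "real^4"
  assumes "\<forall>i. x $ i \<in> \<int>"
  obtains a b c d where "x = int_vec4 a b c d"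
proof -
  from assms obtain a b c d where "x$1 = of_int a" "x$2 = of_int b" "x$3 = of_int c" "x$4 = of_int d"
    by (metis Ints_cases)
  then show thesis using that[of a b c d] by (simp add: vec_eq_iff forall_4)
qed

lemma int_vec4_in_lattice_S_iff:
  "int_vec4 u v w t \<in> lattice_S (of_int d12) (of_int d13) (of_int d23) (of_int d24) (of_int d34)
    \<longleftrightarrow> d34 * v + d24 * w + d23 * t = 0 \<and> d23 * u + d13 * v + d12 * w = 0"
proof -
  have "\<forall>i. int_vec4 u v w t $ i \<in> \<int>" by (simp add: forall_4)
  moreover have "real_of_int d34 * of_int v + of_int d24 * of_int w + of_int d23 * of_int t = 0
      \<longleftrightarrow> d34 * v + d24 * w + d23 * t = 0"
    "real_of_int d23 * of_int u + of_int d13 * of_int v + of_int d12 * of_int w = 0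
      \<longleftrightarrow> d23 * u + d13 * v + d12 * w = 0"
    by (metis of_int_add of_int_mult of_int_eq_0_iff)+
  ultimately show ?thesis by (simp add: lattice_S_def)
qed

lemma independent_pair_by_coordinate:
  fixes U V :: "real^'n"
  assumes "U $ i \<noteq> 0" "V $ i = 0" "V \<noteq> 0"
  shows "independent {U, V}"
proof (rule independent_insertI)
  show "independent {V}" using assms(3) by simp
  show "U \<notin> span {V}"
  proof
    assume "U \<in> span {V}"
    then obtain t where "U = t *\<^sub>R V" by (auto simp: span_singleton)
    then show False using assms(1,2) by simp
  qed
qed

lemma lattice_S_basis:
  fixes d12 d13 d23 d24 d34 :: int
  assumes "d23 \<noteq> 0"
  obtains U V where "U $ 2 \<noteq> 0" "V $ 2 = 0" "V \<noteq> 0"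
    "lattice_S (of_int d12) (of_int d13) (of_int d23) (of_int d24) (of_int d34)
      = {of_int m *\<^sub>R U + of_int n *\<^sub>R V | m n. True}"
proof -
  let ?S = "lattice_S (of_int d12) (of_int d13) (of_int d23) (of_int d24) (of_int d34)"
  define A where "A = {(v, w). d23 dvd d13 * v + d12 * w \<and> d23 dvd d34 * v + d24 * w}"
  define lift where "lift = (\<lambda>(v, w). int_vec4 (- ((d13 * v + d12 * w) div d23)) v w
                                       (- ((d34 * v + d24 * w) div d23)))"
  have S_eq: "?S = lift ` A"
  proof (intro set_eqI iffI)
    fix x assume x: "x \<in> ?S"
    then obtain u v w t where x_eq: "x = int_vec4 u v w t"
      by (auto simp: lattice_S_def elim: Ints_vec4_cases)
    with x have e: "d13 * v + d12 * w = d23 * (- u)" "d34 * v + d24 * w = d23 * (- t)"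
      by (simp_all add: int_vec4_in_lattice_S_iff)
    then have "(v, w) \<in> A" "x = lift (v, w)" using assms by (simp_all add: A_def lift_def x_eq del: mult_minus_right)
    then show "x \<in> lift ` A" by blast
  next
    fix x assume "x \<in> lift ` A"
    then show "x \<in> ?S" by (auto simp: A_def lift_def int_vec4_in_lattice_S_iff elim!: dvdE)
  qed
  have closed: "(m * v + n * v2, m * w + n * w2) \<in> A" if "(v, w) \<in> A" "(v2, w2) \<in> A" for v w v2 w2 m n
  proof -
    have "d13 * (m * v + n * v2) + d12 * (m * w + n * w2) = m * (d13 * v + d12 * w) + n * (d13 * v2 + d12 * w2)"
      "d34 * (m * v + n * v2) + d24 * (m * w + n * w2) = m * (d34 * v + d24 * w) + n * (d34 * v2 + d24 * w2)"
      by (simp_all add: algebra_simps)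
    then show ?thesis using that by (auto simp: A_def intro!: dvd_add dvd_mult)
  qed
  have "(d23, 0) \<in> A" "(0, d23) \<in> A" by (simp_all add: A_def)
  from int_pair_lattice_triangular_basis[OF closed this assms]
  obtain g w0 h where "g \<noteq> 0" "h \<noteq> 0" "(g, w0) \<in> A" "(0, h) \<in> A"
    and A_eq: "A = {(m*g, m*w0 + n*h) | m n. True}" .
  have lift_eq: "lift (v, w) = int_vec4 (- e) v w (- f)"
    if "d13 * v + d12 * w = d23 * e" "d34 * v + d24 * w = d23 * f" for v w e f
    using that assms by (simp add: lift_def)
  obtain e1 f1 e2 f2 where
    ef: "d13 * g + d12 * w0 = d23 * e1" "d34 * g + d24 * w0 = d23 * f1"
        "d12 * h = d23 * e2" "d24 * h = d23 * f2"
    using \<open>(g, w0) \<in> A\<close> \<open>(0, h) \<in> A\<close> by (auto simp: A_def elim!: dvdE)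
  have lift_lin: "lift (m*g, m*w0 + n*h) = of_int m *\<^sub>R lift (g, w0) + of_int n *\<^sub>R lift (0, h)" for m n
  proof -
    have "d13 * (m * g) + d12 * (m * w0 + n * h) = m * (d13 * g + d12 * w0) + n * (d12 * h)"
      "d34 * (m * g) + d24 * (m * w0 + n * h) = m * (d34 * g + d24 * w0) + n * (d24 * h)"
      by (simp_all add: algebra_simps)
    then have "d13 * (m * g) + d12 * (m * w0 + n * h) = d23 * (m * e1 + n * e2)"
      "d34 * (m * g) + d24 * (m * w0 + n * h) = d23 * (m * f1 + n * f2)"
      unfolding ef by (simp_all add: algebra_simps)
    then have "lift (m*g, m*w0 + n*h) = int_vec4 (- (m * e1 + n * e2)) (m * g) (m * w0 + n * h) (- (m * f1 + n * f2))"
      by (rule lift_eq)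
    moreover have "lift (g, w0) = int_vec4 (- e1) g w0 (- f1)" using ef(1,2) by (rule lift_eq)
    moreover have "lift (0, h) = int_vec4 (- e2) 0 h (- f2)" using ef(3,4) by (intro lift_eq) simp_all
    ultimately show ?thesis by (simp add: int_combination_int_vec4 algebra_simps)
  qed
  show thesis
  proof
    show "lift (g, w0) $ 2 \<noteq> 0" "lift (0, h) $ 2 = 0" "lift (0, h) \<noteq> 0"
      using \<open>g \<noteq> 0\<close> \<open>h \<noteq> 0\<close> by (simp_all add: lift_def int_vec4_eq_0_iff)
    have "lift ` A = {lift (m*g, m*w0 + n*h) | m n. True}" unfolding A_eq by blast
    then show "?S = {of_int m *\<^sub>R lift (g, w0) + of_int n *\<^sub>R lift (0, h) | m n. True}"
      unfolding S_eq lift_lin .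
  qed
qed

lemma lattice2_lattice_S:
  fixes d12 d13 d23 d24 d34 :: int
  assumes "d23 \<noteq> 0"
  shows "lattice2 (lattice_S (of_int d12) (of_int d13) (of_int d23) (of_int d24) (of_int d34))"
proof -
  obtain U V where UV: "U $ 2 \<noteq> 0" "V $ 2 = 0" "V \<noteq> 0"
    and "lattice_S (of_int d12) (of_int d13) (of_int d23) (of_int d24) (of_int d34)
      = {of_int m *\<^sub>R U + of_int n *\<^sub>R V | m n. True}"
    using lattice_S_basis assms by blast
  moreover have "U \<noteq> V" "independent {U, V}"
    using UV independent_pair_by_coordinate[OF UV] by auto
  ultimately show ?thesis unfolding lattice2_def by blast
qed

lemma lattice_S_square:
  fixes k d12 d13 d14 d23 d24 d34 :: int
  assumes "d23 \<noteq> 0"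
    and pluecker: "d12 * d34 - d13 * d24 + d14 * d23 = 0"
    and norm: "k^2 = d12^2 + d13^2 + d14^2 + d23^2 + d24^2 + d34^2"
  defines "S \<equiv> lattice_S (of_int d12) (of_int d13) (of_int d23) (of_int d24) (of_int d34)"
  shows "\<exists>X\<in>S. \<exists>Y\<in>S. X \<noteq> 0 \<and> Y \<noteq> 0 \<and> X \<bullet> Y = 0 \<and> X \<bullet> X = Y \<bullet> Y"
proof -
  define r where "r = d13^2 + d23^2 + d34^2"
  define X where "X = int_vec4 (- k * d13) (k * d23) 0 (- k * d34)"
  define Y where "Y = int_vec4 (d12 * d23 - d14 * d34) (d12 * d13 + d24 * d34) (- r) (d14 * d13 + d24 * d23)"
  have "k^2 \<ge> d23^2" unfolding norm
    using zero_le_power2[of d12] zero_le_power2[of d13] zero_le_power2[of d14]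
      zero_le_power2[of d24] zero_le_power2[of d34] by linarith
  moreover have "d23^2 > 0" using \<open>d23 \<noteq> 0\<close> by simp
  ultimately have "k \<noteq> 0" by (metis less_le_trans zero_less_power2)
  moreover have "r > 0" using \<open>d23 \<noteq> 0\<close> by (simp add: r_def add_nonneg_pos add_pos_nonneg)
  ultimately have "X \<noteq> 0" "Y \<noteq> 0" using \<open>d23 \<noteq> 0\<close> by (simp_all add: X_def Y_def int_vec4_eq_0_iff)
  moreover have "X \<in> S" by (simp add: S_def X_def int_vec4_in_lattice_S_iff)
  moreover have "Y \<in> S"
  proof -
    have "d34 * (d12 * d13 + d24 * d34) + d24 * (- r) + d23 * (d14 * d13 + d24 * d23)
        = d13 * (d12 * d34 - d13 * d24 + d14 * d23)"
      "d23 * (d12 * d23 - d14 * d34) + d13 * (d12 * d13 + d24 * d34) + d12 * (- r)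
        = - d34 * (d12 * d34 - d13 * d24 + d14 * d23)"
      unfolding r_def by algebra+
    then show ?thesis using pluecker by (simp add: S_def Y_def int_vec4_in_lattice_S_iff)
  qed
  moreover have "X \<bullet> Y = 0" unfolding X_def Y_def inner_int_vec4 of_int_eq_0_iff by algebra
  moreover have "X \<bullet> X = Y \<bullet> Y"
  proof -
    have "X \<bullet> X = of_int (r * k^2)" unfolding X_def inner_int_vec4 of_int_eq_iff r_def by algebra
    moreover
    have "Y \<bullet> Y = of_int (r * (d12^2 + d13^2 + d14^2 + d23^2 + d24^2 + d34^2)
                            - (d12 * d34 - d13 * d24 + d14 * d23)^2)"
      unfolding Y_def inner_int_vec4 of_int_eq_iff r_def by algebra
    ultimately show ?thesis using pluecker norm by simp
  qed
  ultimately show ?thesis by blast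
qed

theorem theorem2p8:
  fixes k a b c a' b' c' :: int
  assumes k_pos: "k > 0" and k_odd: "odd k"
    and rep1: "k^2 = a^2 + b^2 + c^2"
    and rep2: "k^2 = a'^2 + b'^2 + c'^2"
    and diff: "(a, b, c) \<noteq> (a', b', c')"
    and gcd1: "Gcd {a, b, c, a', b', c'} = 1"
    and cc: "c' > c"
    and aodd: "odd a" and a'odd: "odd a'"
  defines "D12 \<equiv> (real_of_int a' - real_of_int a) / 2"
    and "D34 \<equiv> (real_of_int a + real_of_int a') / 2"
    and "D13 \<equiv> - (real_of_int b' - real_of_int b) / 2"
    and "D24 \<equiv> (real_of_int b + real_of_int b') / 2"
    and "D14 \<equiv> (real_of_int c + real_of_int c') / 2"
    and "D23 \<equiv> (real_of_int c' - real_of_int c) / 2"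
  shows "D12 \<in> \<int> \<and> D34 \<in> \<int> \<and> D13 \<in> \<int> \<and> D24 \<in> \<int> \<and> D14 \<in> \<int> \<and> D23 \<in> \<int>
    \<and> D12 * D34 - D13 * D24 + D14 * D23 = 0
    \<and> (real_of_int k)^2 = (D12 + D34)^2 + (D13 - D24)^2 + (D14 + D23)^2
    \<and> (real_of_int k)^2 = (D12 - D34)^2 + (D13 + D24)^2 + (D14 - D23)^2
    \<and> lattice2 (lattice_S D12 D13 D23 D24 D34)
    \<and> (\<exists>X\<in>lattice_S D12 D13 D23 D24 D34. \<exists>Y\<in>lattice_S D12 D13 D23 D24 D34. X \<noteq> 0 \<and> Y \<noteq> 0 \<and> X \<bullet> Y = 0 \<and> X \<bullet> X = Y \<bullet> Y)"
proof -
  have "even b" "even c" "even b'" "even c'"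
    using odd_square_sum_three_squares_even[OF k_odd aodd rep1]
      odd_square_sum_three_squares_even[OF k_odd aodd, of c b]
      odd_square_sum_three_squares_even[OF k_odd a'odd rep2]
      odd_square_sum_three_squares_even[OF k_odd a'odd, of c' b'] rep1 rep2
    by (simp_all add: ac_simps)
  then have "even (a' - a)" "even (a + a')" "even (b - b')" "even (b + b')" "even (c + c')" "even (c' - c)"
    using aodd a'odd by auto
  then obtain d12 d34 d13 d24 d14 d23 where
    d: "a' - a = 2 * d12" "a + a' = 2 * d34" "b - b' = 2 * d13"
       "b + b' = 2 * d24" "c + c' = 2 * d14" "c' - c = 2 * d23"
    by (metis evenE)
  then have D: "D12 = of_int d12" "D34 = of_int d34" "D13 = of_int d13"
      "D24 = of_int d24" "D14 = of_int d14" "D23 = of_int d23"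
    unfolding D12_def D34_def D13_def D24_def D14_def D23_def
    by (simp_all add: field_simps flip: of_int_diff of_int_add of_int_mult)
  have reps: "k^2 = (d34 - d12)^2 + (d24 + d13)^2 + (d14 - d23)^2"
      "k^2 = (d12 + d34)^2 + (d24 - d13)^2 + (d14 + d23)^2"
    using rep1 rep2 d by (smt (verit))+
  note pluecker = pluecker_relation_of_two_representations[OF reps]
  have "k^2 = (d12 + d34)^2 + (d13 - d24)^2 + (d14 + d23)^2"
      "k^2 = (d12 - d34)^2 + (d13 + d24)^2 + (d14 - d23)^2"
    using reps by (simp_all add: power2_commute ac_simps)
  then have "(real_of_int k)^2 = (of_int d12 + of_int d34)^2 + (of_int d13 - of_int d24)^2 + (of_int d14 + of_int d23)^2"
      "(real_of_int k)^2 = (of_int d12 - of_int d34)^2 + (of_int d13 + of_int d24)^2 + (of_int d14 - of_int d23)^2"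
    by (metis of_int_add of_int_diff of_int_power)+
  moreover have "real_of_int d12 * of_int d34 - of_int d13 * of_int d24 + of_int d14 * of_int d23 = 0"
    using pluecker(1) by (metis of_int_0 of_int_add of_int_diff of_int_mult)
  moreover have "d23 \<noteq> 0" using cc d by linarith
  ultimately show ?thesis
    unfolding D using lattice2_lattice_S lattice_S_square[OF _ pluecker] by simp
qed

end
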